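(* Let $\{A_{k,n}:0\le k\le n,\ n\in\mathbb N\}$ be a triangular array of complex random variables satisfying Assumptions 1* and 2*. Then almost surely: $\lim_{n\to\infty}|A_{n,n}|^{1/n}=1$; for each fixed $k\ge0$, $\lim_{n\to\infty}|A_{k,n}|^{1/n}=1$; and $\lim_{n\to\infty}\max_{0\le k\le n}|A_{k,n}|^{1/n}=1$.
   Context: $F_{k,n}(x)=\mathbb P(|A_{k,n}|\le x)$. Assumption 1*: there is $N\in\mathbb N$ such that for each $n\ge N$ the random variables $|A_{0,n}|,\dots,|A_{n,n}|$ are jointly independent; and there are $a>1$ and a function $f:[a,\infty)\to[0,1]$ such that $f(x)\log x$ is decreasing, $\int_a^\infty f(x)\frac{\log x}{x}\,dx<\infty$, and $1-F_{k,n}(x)\le f(x)$ for all $x\ge a$, all $0\le k\le n$, all $n\ge N$. Assumption 2*: there are $N\in\mathbb N$, $0<b<1$ and an increasing $g:[0,b]\to[0,1]$ with $\int_0^bg(x)\,dx/x<\infty$ and $F_{k,n}(x)\le g(x)$ for all $x\in[0,b]$, $0\le k\le n$, $n\ge N$. *)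

theory Defs
  imports "HOL-Probability.Probability"
begin

definition cdf_abs :: "'a measure \<Rightarrow> ('a \<Rightarrow> complex) \<Rightarrow> real \<Rightarrow> real" where
  "cdf_abs M X x = measure M {\<omega> \<in> space M. cmod (X \<omega>) \<le> x}"

end

theory Submission
  imports Defs "HOL-Real_Asymp.Real_Asymp"
begin

(* Fix e > 0.  By a union bound, the probability that some |A k n|,
   k <= n, exceeds exp (n e) is at most (n + 1) f (exp (n e)); the probability
   that a given |A k n| is at most exp (-n e) is at most g (exp (-n e)).
   Comparing these sums with the integrals of f x ln x / x over [a, oo) and of
   g x / x over (0, b] on the exponential grid exp (m e) shows that both series
   converge, so Borel-Cantelli gives, almost surely and for all large n,
   exp (-n e) <= |A k n| <= exp (n e).  Taking e = 1/(j+1) for all j at once,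
   n-th roots squeeze the three sequences of the theorem to 1. *)

lemma eventually_exp_linear_ge:
  fixes e c :: real
  assumes "e > 0"
  shows "eventually (\<lambda>n. c \<le> exp (real n * e)) sequentially"
proof -
  have "filterlim (\<lambda>n::nat. exp (real n * e)) at_top sequentially" using assms by real_asymp
  then show ?thesis by (simp add: filterlim_at_top)
qed

lemma eventually_exp_neg_linear_le:
  fixes e b :: real
  assumes "e > 0" and "b > 0"
  shows "eventually (\<lambda>n. exp (-(real n * e)) \<le> b) sequentially"
proof -
  have "(\<lambda>n::nat. exp (-(real n * e))) \<longlonglongrightarrow> 0" using assms(1) by real_asymp
  from order_tendstoD(2)[OF this assms(2)] show ?thesis by (rule eventually_mono) simp
qed

lemma summable_of_dominated_steps:
  fixes h :: "real \<Rightarrow> real" and l u d :: "nat \<Rightarrow> real"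
  assumes fin: "(\<integral>\<^sup>+ x\<in>S. ennreal (h x) \<partial>lborel) < \<infinity>"
    and sub: "\<And>n. {l n..<u n} \<subseteq> S"
    and disj: "disjoint_family (\<lambda>n. {l n..<u n})"
    and lu: "\<And>n. l n \<le> u n"
    and d0: "\<And>n. 0 \<le> d n"
    and dh: "\<And>n x. x \<in> {l n..<u n} \<Longrightarrow> d n \<le> h x"
  shows "summable (\<lambda>n. d n * (u n - l n))"
proof -
  have step_integral: "(\<integral>\<^sup>+x. (\<Sum>n. ennreal (d n) * indicator {l n..<u n} x) \<partial>lborel)
      = (\<Sum>n. ennreal (d n * (u n - l n)))"
    using d0 lu by (subst nn_integral_suminf) (simp_all add: nn_integral_cmult_indicator ennreal_mult)
  have dominated: "(\<Sum>n. ennreal (d n) * indicator {l n..<u n} x) \<le> ennreal (h x) * indicator S x" for x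
  proof (cases "\<exists>m. x \<in> {l m..<u m}")
    case True
    then obtain m where m: "x \<in> {l m..<u m}" by blast
    have "x \<notin> {l n..<u n}" if "n \<noteq> m" for n
      using disj m that unfolding disjoint_family_on_def by blast
    then have "(\<Sum>n. ennreal (d n) * indicator {l n..<u n} x) = ennreal (d m)"
      using m by (subst suminf_finite[of "{m}"]) auto
    also have "\<dots> \<le> ennreal (h x) * indicator S x"
      using m sub[of m] dh[OF m] by (auto simp: ennreal_leI)
    finally show ?thesis .
  qed simp
  have "(\<Sum>n. ennreal (d n * (u n - l n))) \<le> (\<integral>\<^sup>+x\<in>S. ennreal (h x) \<partial>lborel)"
    unfolding step_integral[symmetric] by (intro nn_integral_mono dominated)
  with fin have "(\<Sum>n. ennreal (d n * (u n - l n))) \<noteq> \<top>" by (auto simp: top_unique)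
  then show ?thesis using d0 lu by (intro summable_suminf_not_top) auto
qed

lemma exp_grid_disjoint:
  fixes e :: real and \<sigma> :: "nat \<Rightarrow> int"
  assumes "e > 0" and "inj \<sigma>"
  shows "disjoint_family (\<lambda>n. {exp (real_of_int (\<sigma> n) * e)..<exp (real_of_int (\<sigma> n + 1) * e)})"
proof -
  have "exp ((s + 1) * e) \<le> exp (s' * e)" if "s < s'" for s s' :: int
    using that \<open>e > 0\<close> by (intro exp_mono mult_right_mono) auto
  then show ?thesis
    using \<open>inj \<sigma>\<close> unfolding disjoint_family_on_def inj_def
    by (metis disjoint_iff atLeastLessThan_iff linorder_neqE order.trans not_le)
qed

(* On that
   interval, of length (1 - exp (-e)) times its right end u, w n / u lies below
   h, so this is an instance of the previous lemma. *)
lemma summable_of_integral_on_exp_grid: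
  fixes e :: real and h :: "real \<Rightarrow> real" and w :: "nat \<Rightarrow> real" and \<sigma> :: "nat \<Rightarrow> int"
  assumes fin: "(\<integral>\<^sup>+ x\<in>S. ennreal (h x) \<partial>lborel) < \<infinity>"
    and e: "e > 0" and inj: "inj \<sigma>"
    and sub: "\<And>n. {exp (real_of_int (\<sigma> n) * e)..<exp (real_of_int (\<sigma> n + 1) * e)} \<subseteq> S"
    and w0: "\<And>n. 0 \<le> w n"
    and wh: "\<And>n x. x \<in> {exp (real_of_int (\<sigma> n) * e)..<exp (real_of_int (\<sigma> n + 1) * e)} \<Longrightarrow> w n \<le> x * h x"
  shows "summable w"
proof -
  define l where "l n = exp (real_of_int (\<sigma> n) * e)" for n
  define u where "u n = exp (real_of_int (\<sigma> n + 1) * e)" for n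
  have u_pos: "0 < u n" for n unfolding u_def by simp
  have l_eq: "l n = u n * exp (-e)" for n
    unfolding l_def u_def by (simp add: mult_exp_exp algebra_simps)
  have "summable (\<lambda>n. w n / u n * (u n - l n))"
  proof (rule summable_of_dominated_steps[OF fin])
    show "{l n..<u n} \<subseteq> S" "l n \<le> u n" "0 \<le> w n / u n" for n
      using sub[of n] w0[of n] u_pos[of n] e by (auto simp: l_def u_def)
    show "disjoint_family (\<lambda>n. {l n..<u n})"
      unfolding l_def u_def using e inj by (rule exp_grid_disjoint)
    show "w n / u n \<le> h x" if x: "x \<in> {l n..<u n}" for n x
    proof -
      have "0 < x" using x unfolding l_def by (meson atLeastLessThan_iff exp_gt_zero less_le_trans)
      then have "w n / u n \<le> w n / x" using x w0[of n] by (intro divide_left_mono) auto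
      also have "\<dots> \<le> h x" using wh[of x n] x \<open>0 < x\<close> by (simp add: l_def u_def divide_le_eq mult.commute)
      finally show ?thesis .
    qed
  qed
  moreover have "w n / u n * (u n - l n) = (1 - exp (-e)) * w n" for n
    using u_pos[of n] unfolding l_eq by (simp add: field_simps)
  moreover have "1 - exp (-e) \<noteq> 0" using e by simp
  ultimately show ?thesis by simp
qed

(* The upper-tail weights of Assumption 1*: the series of n f (exp (n e))
   converges, by the grid integral test with h x = f x ln x / x, using that
   f x ln x is decreasing. *)
lemma summable_upper_tail_weights:
  fixes f :: "real \<Rightarrow> real" and a e :: real
  assumes a: "a > 1" and f0: "\<forall>x\<ge>a. 0 \<le> f x" and anti: "antimono_on {a..} (\<lambda>x. f x * ln x)"
    and fin: "(\<integral>\<^sup>+ x\<in>{a..}. ennreal (f x * ln x / x) \<partial>lborel) < \<infinity>" and e: "e > 0"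
  shows "summable (\<lambda>n. real n * f (exp (real n * e)))"
proof -
  obtain n0 where n0: "\<And>n. n \<ge> n0 \<Longrightarrow> a \<le> exp (real n * e)"
    using eventually_exp_linear_ge[OF e] unfolding eventually_sequentially by blast
  define u where "u n = exp (real (n + Suc n0) * e)" for n
  have grid: "exp (real_of_int (int (n + n0)) * e) = exp (real (n + n0) * e)"
    "exp (real_of_int (int (n + n0) + 1) * e) = u n" for n
    by (simp_all add: u_def)
  have u_ge: "a \<le> u n" for n using n0[of "n + Suc n0"] by (simp add: u_def)
  have "summable (\<lambda>n. ln (u n) * f (u n))"
  proof (rule summable_of_integral_on_exp_grid[OF fin e, where \<sigma>="\<lambda>n. int (n + n0)"])
    show "inj (\<lambda>n. int (n + n0))" by (auto simp: inj_def)
    show "{exp (real_of_int (int (n + n0)) * e)..<exp (real_of_int (int (n + n0) + 1) * e)} \<subseteq> {a..}" for n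
      using n0[of "n + n0"] unfolding grid by auto
    show "0 \<le> ln (u n) * f (u n)" for n using f0 u_ge[of n] a by simp
    show "ln (u n) * f (u n) \<le> x * (f x * ln x / x)"
      if x: "x \<in> {exp (real_of_int (int (n + n0)) * e)..<exp (real_of_int (int (n + n0) + 1) * e)}" for n x
    proof -
      have "a \<le> x" "x \<le> u n" using x n0[of "n + n0"] unfolding grid by auto
      then have "f (u n) * ln (u n) \<le> f x * ln x" using u_ge[of n] by (intro monotone_onD[OF anti]) auto
      then show ?thesis using \<open>a \<le> x\<close> a by (simp add: mult.commute)
    qed
  qed
  then have "summable (\<lambda>n. e * (real (n + Suc n0) * f (exp (real (n + Suc n0) * e))))"
    by (simp add: u_def algebra_simps)
  then have "summable (\<lambda>n. real (n + Suc n0) * f (exp (real (n + Suc n0) * e)))"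
    using e summable_cmult_iff by (metis less_irrefl)
  then show ?thesis by (rule summable_iff_shift[THEN iffD1])
qed

(* The lower-tail weights of Assumption 2*: the series of g (exp (-n e))
   converges, by the grid integral test with h x = g x / x, using that g is
   increasing. *)
lemma summable_lower_tail_weights:
  fixes g :: "real \<Rightarrow> real" and b e :: real
  assumes b: "0 < b" and g0: "\<forall>x\<in>{0..b}. 0 \<le> g x" and mono: "mono_on {0..b} g"
    and fin: "(\<integral>\<^sup>+ x\<in>{0..b}. ennreal (g x / x) \<partial>lborel) < \<infinity>" and e: "e > 0"
  shows "summable (\<lambda>n. g (exp (-(real n * e))))"
proof -
  obtain n0 where n0: "\<And>n. n \<ge> n0 \<Longrightarrow> exp (-(real n * e)) \<le> b"
    using eventually_exp_neg_linear_le[OF e b] unfolding eventually_sequentially by blast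
  define l where "l n = exp (-(real (n + Suc n0) * e))" for n
  have grid: "exp (real_of_int (- int (n + Suc n0)) * e) = l n"
    "exp (real_of_int (- int (n + Suc n0) + 1) * e) = exp (-(real (n + n0) * e))" for n
    by (simp_all add: l_def algebra_simps)
  have l_pos: "0 < l n" for n by (simp add: l_def)
  have "summable (\<lambda>n. g (l n))"
  proof (rule summable_of_integral_on_exp_grid[OF fin e, where \<sigma>="\<lambda>n. - int (n + Suc n0)"])
    show "inj (\<lambda>n. - int (n + Suc n0))" by (auto simp: inj_def)
    show "{exp (real_of_int (- int (n + Suc n0)) * e)..<exp (real_of_int (- int (n + Suc n0) + 1) * e)} \<subseteq> {0..b}" for n
      using n0[of "n + n0"] l_pos[of n] unfolding grid by auto
    show "0 \<le> g (l n)" for n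
      using g0 l_pos[of n] n0[of "n + Suc n0"] by (simp add: l_def)
    show "g (l n) \<le> x * (g x / x)"
      if x: "x \<in> {exp (real_of_int (- int (n + Suc n0)) * e)..<exp (real_of_int (- int (n + Suc n0) + 1) * e)}" for n x
    proof -
      have "l n \<le> x" "x \<le> b" using x n0[of "n + n0"] unfolding grid by auto
      then have "g (l n) \<le> g x" using l_pos[of n] by (intro mono_onD[OF mono]) auto
      then show ?thesis using \<open>l n \<le> x\<close> l_pos[of n] by simp
    qed
  qed
  then show ?thesis unfolding l_def by (rule summable_iff_shift[THEN iffD1])
qed

lemma tendsto_one_of_exp_bounds:
  fixes x e :: "nat \<Rightarrow> real"
  assumes e: "e \<longlonglongrightarrow> 0"
    and bounds: "\<And>j. eventually (\<lambda>n. exp (- e j) \<le> x n \<and> x n \<le> exp (e j)) sequentially"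
  shows "x \<longlonglongrightarrow> 1"
  unfolding tendsto_iff
proof (intro allI impI)
  fix r :: real assume "r > 0"
  have "(\<lambda>j. exp (e j)) \<longlonglongrightarrow> 1" "(\<lambda>j. exp (- e j)) \<longlonglongrightarrow> 1"
    using tendsto_exp[OF e] tendsto_exp[OF tendsto_minus[OF e]] by simp_all
  then have "eventually (\<lambda>j. dist (exp (e j)) 1 < r \<and> dist (exp (- e j)) 1 < r) sequentially"
    using \<open>r > 0\<close> by (intro eventually_conj tendstoD)
  then obtain j where j: "dist (exp (e j)) 1 < r" "dist (exp (- e j)) 1 < r"
    unfolding eventually_sequentially by blast
  show "eventually (\<lambda>n. dist (x n) 1 < r) sequentially"
    using bounds[of j] by eventually_elim (use j in \<open>auto simp: dist_real_def\<close>)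
qed

lemma root_le_exp:
  fixes c t :: real
  assumes "n > 0" "0 \<le> c" "c \<le> exp (real n * t)"
  shows "c powr (1 / real n) \<le> exp t"
proof -
  have "c powr (1 / real n) \<le> exp (real n * t) powr (1 / real n)"
    using assms by (intro powr_mono2) auto
  also have "\<dots> = exp t" using assms(1) by (simp add: exp_powr_real)
  finally show ?thesis .
qed

lemma exp_le_root:
  fixes c t :: real
  assumes "n > 0" "exp (-(real n * t)) \<le> c"
  shows "exp (- t) \<le> c powr (1 / real n)"
proof -
  have "exp (- t) = exp (-(real n * t)) powr (1 / real n)"
    using assms(1) by (simp add: exp_powr_real)
  also have "\<dots> \<le> c powr (1 / real n)" using assms by (intro powr_mono2) auto
  finally show ?thesis .
qed

lemma root_tendsto_one:
  fixes c e :: "nat \<Rightarrow> real"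
  assumes e: "e \<longlonglongrightarrow> 0"
    and bounds: "\<And>j. eventually (\<lambda>n. exp (-(real n * e j)) \<le> c n \<and> c n \<le> exp (real n * e j)) sequentially"
  shows "(\<lambda>n. c n powr (1 / real n)) \<longlonglongrightarrow> 1"
proof (rule tendsto_one_of_exp_bounds[OF e])
  fix j
  show "eventually (\<lambda>n. exp (- e j) \<le> c n powr (1 / real n) \<and> c n powr (1 / real n) \<le> exp (e j)) sequentially"
    using bounds[of j] eventually_gt_at_top[of 0]
  proof eventually_elim
    case (elim n)
    have "0 \<le> c n" using elim(1) by (meson exp_ge_zero order_trans)
    then show ?case using elim exp_le_root root_le_exp by blast
  qed
qed

lemma max_root_tendsto_one:
  fixes c :: "nat \<Rightarrow> nat \<Rightarrow> real" and e :: "nat \<Rightarrow> real"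
  assumes e: "e \<longlonglongrightarrow> 0" and nonneg: "\<And>k n. 0 \<le> c k n"
    and upper: "\<And>j. eventually (\<lambda>n. \<forall>k\<le>n. c k n \<le> exp (real n * e j)) sequentially"
    and diag: "\<And>j. eventually (\<lambda>n. exp (-(real n * e j)) \<le> c n n) sequentially"
  shows "(\<lambda>n. Max {c k n powr (1 / real n) | k. k \<le> n}) \<longlonglongrightarrow> 1"
proof -
  have row: "{c k n powr (1 / real n) | k. k \<le> n} = (\<lambda>k. c k n powr (1 / real n)) ` {..n}" for n
    by auto
  show ?thesis unfolding row
  proof (rule tendsto_one_of_exp_bounds[OF e])
    fix j
    show "eventually (\<lambda>n. exp (- e j) \<le> Max ((\<lambda>k. c k n powr (1 / real n)) ` {..n})
        \<and> Max ((\<lambda>k. c k n powr (1 / real n)) ` {..n}) \<le> exp (e j)) sequentially"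
      using upper[of j] diag[of j] eventually_gt_at_top[of 0]
    proof eventually_elim
      case (elim n)
      have "exp (- e j) \<le> c n n powr (1 / real n)" using elim by (intro exp_le_root) auto
      also have "\<dots> \<le> Max ((\<lambda>k. c k n powr (1 / real n)) ` {..n})" by (intro Max_ge) auto
      finally show ?case using elim nonneg by (auto intro: root_le_exp)
    qed
  qed
qed

lemma triangular_root_limits:
  fixes c :: "nat \<Rightarrow> nat \<Rightarrow> real" and e :: "nat \<Rightarrow> real"
  assumes e: "e \<longlonglongrightarrow> 0" and nonneg: "\<And>k n. 0 \<le> c k n"
    and upper: "\<And>j. eventually (\<lambda>n. \<forall>k\<le>n. c k n \<le> exp (real n * e j)) sequentially"
    and diag: "\<And>j. eventually (\<lambda>n. exp (-(real n * e j)) \<le> c n n) sequentially"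
    and column: "\<And>k j. eventually (\<lambda>n. exp (-(real n * e j)) \<le> c k n) sequentially"
  shows "(\<lambda>n. c n n powr (1 / real n)) \<longlonglongrightarrow> 1
    \<and> (\<forall>k. (\<lambda>n. c k n powr (1 / real n)) \<longlonglongrightarrow> 1)
    \<and> (\<lambda>n. Max {c k n powr (1 / real n) | k. k \<le> n}) \<longlonglongrightarrow> 1"
proof (intro conjI allI)
  show "(\<lambda>n. c n n powr (1 / real n)) \<longlonglongrightarrow> 1"
  proof (rule root_tendsto_one[OF e])
    fix j
    show "eventually (\<lambda>n. exp (-(real n * e j)) \<le> c n n \<and> c n n \<le> exp (real n * e j)) sequentially"
      using upper[of j] diag[of j] by eventually_elim auto
  qed
  show "(\<lambda>n. c k n powr (1 / real n)) \<longlonglongrightarrow> 1" for k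
  proof (rule root_tendsto_one[OF e])
    fix j
    show "eventually (\<lambda>n. exp (-(real n * e j)) \<le> c k n \<and> c k n \<le> exp (real n * e j)) sequentially"
      using upper[of j] column[where k = k and j = j] eventually_ge_at_top[of k] by eventually_elim auto
  qed
  show "(\<lambda>n. Max {c k n powr (1 / real n) | k. k \<le> n}) \<longlonglongrightarrow> 1"
    using e nonneg upper diag by (rule max_root_tendsto_one)
qed

lemma (in prob_space) AE_eventually_notin:
  assumes events: "\<And>n. E n \<in> events" and summable: "summable \<beta>"
    and bound: "eventually (\<lambda>n. prob (E n) \<le> \<beta> n) sequentially"
  shows "AE \<omega> in M. eventually (\<lambda>n. \<omega> \<notin> E n) sequentially"
proof -
  have "summable (\<lambda>n. prob (E n))"
    using bound by (intro summable_comparison_test_ev[OF _ summable]) auto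
  then have "AE \<omega> in M. eventually (\<lambda>n. \<omega> \<in> space M - E n) sequentially"
    using events by (intro borel_cantelli_AE1) (auto simp: less_top[symmetric] emeasure_finite)
  then show ?thesis by eventually_elim (auto elim: eventually_mono)
qed

(* The union
   bound over the n + 1 entries of a row gives the weight n f (exp (n e)). *)
lemma (in prob_space) AE_eventually_row_le_exp:
  fixes Y :: "nat \<Rightarrow> nat \<Rightarrow> 'a \<Rightarrow> real" and f :: "real \<Rightarrow> real" and a e :: real
  assumes meas: "\<And>k n. k \<le> n \<Longrightarrow> Y k n \<in> borel_measurable M"
    and tail: "\<And>x n k. a \<le> x \<Longrightarrow> N \<le> n \<Longrightarrow> k \<le> n \<Longrightarrow> prob {\<omega>\<in>space M. x < Y k n \<omega>} \<le> f x"
    and a: "a > 1" and f0: "\<forall>x\<ge>a. 0 \<le> f x" and anti: "antimono_on {a..} (\<lambda>x. f x * ln x)"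
    and fin: "(\<integral>\<^sup>+ x\<in>{a..}. ennreal (f x * ln x / x) \<partial>lborel) < \<infinity>" and e: "e > 0"
  shows "AE \<omega> in M. eventually (\<lambda>n. \<forall>k\<le>n. Y k n \<omega> \<le> exp (real n * e)) sequentially"
proof -
  define E where "E n = (\<Union>k\<in>{..n}. {\<omega>\<in>space M. exp (real n * e) < Y k n \<omega>})" for n
  have events: "E n \<in> events" for n
    unfolding E_def using meas by (intro sets.finite_UN) auto
  have "eventually (\<lambda>n. prob (E n) \<le> 2 * (real n * f (exp (real n * e)))) sequentially"
    using eventually_exp_linear_ge[OF e, of a] eventually_ge_at_top[of N] eventually_ge_at_top[of 1]
  proof eventually_elim
    case (elim n)
    have "prob (E n) \<le> (\<Sum>k\<in>{..n}. prob {\<omega>\<in>space M. exp (real n * e) < Y k n \<omega>})"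
      unfolding E_def using meas by (intro finite_measure_subadditive_finite) auto
    also have "\<dots> \<le> (\<Sum>k\<in>{..n}. f (exp (real n * e)))"
      using elim by (intro sum_mono tail) auto
    also have "\<dots> = (1 + real n) * f (exp (real n * e))" by simp
    also have "\<dots> \<le> (2 * real n) * f (exp (real n * e))"
      using elim f0 by (intro mult_right_mono) auto
    finally show ?case by simp
  qed
  then have "AE \<omega> in M. eventually (\<lambda>n. \<omega> \<notin> E n) sequentially"
    by (rule AE_eventually_notin[OF events summable_mult[OF summable_upper_tail_weights[OF a f0 anti fin e]]])
  with AE_space show ?thesis
    by eventually_elim (auto simp: E_def not_less elim: eventually_mono)
qed

(* Lower half of the estimate: under the bound of Assumption 2* on the
   distribution functions, almost surely the entry in column \<kappa> n of row n is
   eventually at least exp (-n e); \<kappa> may be a fixed column or the diagonal. *)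
lemma (in prob_space) AE_eventually_exp_neg_le:
  fixes Y :: "nat \<Rightarrow> nat \<Rightarrow> 'a \<Rightarrow> real" and g :: "real \<Rightarrow> real" and b e :: real
    and \<kappa> :: "nat \<Rightarrow> nat"
  assumes meas: "\<And>k n. k \<le> n \<Longrightarrow> Y k n \<in> borel_measurable M"
    and cdf: "\<And>x n k. x \<in> {0..b} \<Longrightarrow> N \<le> n \<Longrightarrow> k \<le> n \<Longrightarrow> prob {\<omega>\<in>space M. Y k n \<omega> \<le> x} \<le> g x"
    and b: "0 < b" and g0: "\<forall>x\<in>{0..b}. 0 \<le> g x" and mono: "mono_on {0..b} g"
    and fin: "(\<integral>\<^sup>+ x\<in>{0..b}. ennreal (g x / x) \<partial>lborel) < \<infinity>" and e: "e > 0"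
    and column: "eventually (\<lambda>n. \<kappa> n \<le> n) sequentially"
  shows "AE \<omega> in M. eventually (\<lambda>n. exp (-(real n * e)) \<le> Y (\<kappa> n) n \<omega>) sequentially"
proof -
  define E where "E n = {\<omega>\<in>space M. \<kappa> n \<le> n \<and> Y (\<kappa> n) n \<omega> \<le> exp (-(real n * e))}" for n
  have events: "E n \<in> events" for n
    using meas[of "\<kappa> n" n] by (cases "\<kappa> n \<le> n") (auto simp: E_def)
  have "eventually (\<lambda>n. prob (E n) \<le> g (exp (-(real n * e)))) sequentially"
    using eventually_exp_neg_linear_le[OF e b] eventually_ge_at_top[of N] column
    by eventually_elim (auto simp: E_def intro: cdf)
  then have "AE \<omega> in M. eventually (\<lambda>n. \<omega> \<notin> E n) sequentially"
    by (rule AE_eventually_notin[OF events summable_lower_tail_weights[OF b g0 mono fin e]])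
  with AE_space show ?thesis
  proof eventually_elim
    case (elim \<omega>)
    from elim(2) column show ?case by eventually_elim (use elim(1) in \<open>auto simp: E_def\<close>)
  qed
qed

lemma (in prob_space) AE_triangular_root_limits:
  fixes Y :: "nat \<Rightarrow> nat \<Rightarrow> 'a \<Rightarrow> real"
  assumes meas: "\<And>k n. k \<le> n \<Longrightarrow> Y k n \<in> borel_measurable M"
    and nonneg: "\<And>k n \<omega>. 0 \<le> Y k n \<omega>"
    and tail: "\<And>x n k. a \<le> x \<Longrightarrow> N1 \<le> n \<Longrightarrow> k \<le> n \<Longrightarrow> prob {\<omega>\<in>space M. x < Y k n \<omega>} \<le> f x"
    and a: "a > 1" and f0: "\<forall>x\<ge>a. 0 \<le> f x" and anti: "antimono_on {a..} (\<lambda>x. f x * ln x)"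
    and fin1: "(\<integral>\<^sup>+ x\<in>{a..}. ennreal (f x * ln x / x) \<partial>lborel) < \<infinity>"
    and cdf: "\<And>x n k. x \<in> {0..b} \<Longrightarrow> N2 \<le> n \<Longrightarrow> k \<le> n \<Longrightarrow> prob {\<omega>\<in>space M. Y k n \<omega> \<le> x} \<le> g x"
    and b: "0 < b" and g0: "\<forall>x\<in>{0..b}. 0 \<le> g x" and mono: "mono_on {0..b} g"
    and fin2: "(\<integral>\<^sup>+ x\<in>{0..b}. ennreal (g x / x) \<partial>lborel) < \<infinity>"
  shows "AE \<omega> in M. (\<lambda>n. Y n n \<omega> powr (1 / real n)) \<longlonglongrightarrow> 1
    \<and> (\<forall>k. (\<lambda>n. Y k n \<omega> powr (1 / real n)) \<longlonglongrightarrow> 1)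
    \<and> (\<lambda>n. Max {Y k n \<omega> powr (1 / real n) | k. k \<le> n}) \<longlonglongrightarrow> 1"
proof -
  define e where "e j = 1 / real (Suc j)" for j
  have e: "e \<longlonglongrightarrow> 0" "\<And>j. e j > 0" unfolding e_def by real_asymp simp
  note lower = AE_eventually_exp_neg_le[where Y = Y, OF meas cdf b g0 mono fin2 e(2)]
  have "AE \<omega> in M. \<forall>j. eventually (\<lambda>n. \<forall>k\<le>n. Y k n \<omega> \<le> exp (real n * e j)) sequentially"
    unfolding AE_all_countable using AE_eventually_row_le_exp[where Y = Y, OF meas tail a f0 anti fin1 e(2)] by blast
  moreover have "AE \<omega> in M. \<forall>j. eventually (\<lambda>n. exp (-(real n * e j)) \<le> Y n n \<omega>) sequentially"
    unfolding AE_all_countable using lower[where \<kappa> = id] by simp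
  moreover have "AE \<omega> in M. \<forall>k j. eventually (\<lambda>n. exp (-(real n * e j)) \<le> Y k n \<omega>) sequentially"
    unfolding AE_all_countable using lower[where \<kappa> = "\<lambda>_. k" for k] eventually_ge_at_top by blast
  ultimately show ?thesis
  proof eventually_elim
    case (elim \<omega>)
    show ?case using nonneg elim by (intro triangular_root_limits[OF e(1)]) auto
  qed
qed

lemma (in prob_space) prob_abs_greater:
  assumes "X \<in> borel_measurable M"
  shows "prob {\<omega>\<in>space M. x < cmod (X \<omega>)} = 1 - cdf_abs M X x"
proof -
  have "{\<omega>\<in>space M. x < cmod (X \<omega>)} = space M - {\<omega>\<in>space M. cmod (X \<omega>) \<le> x}" by auto
  moreover have "{\<omega>\<in>space M. cmod (X \<omega>) \<le> x} \<in> events" using assms by measurable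
  ultimately show ?thesis by (simp add: prob_compl cdf_abs_def)
qed

theorem lemma4p3:
  fixes M :: "'a measure" and A :: "nat \<Rightarrow> nat \<Rightarrow> 'a \<Rightarrow> complex"
  assumes P: "prob_space M"
    and meas: "\<And>k n. k \<le> n \<Longrightarrow> A k n \<in> borel_measurable M"
    and assm1: "\<exists>N::nat. (\<forall>n\<ge>N. prob_space.indep_vars M (\<lambda>_. borel) (\<lambda>k \<omega>. cmod (A k n \<omega>)) {0..n})
        \<and> (\<exists>(a::real) (f::real \<Rightarrow> real). a > 1
              \<and> (\<forall>x\<ge>a. 0 \<le> f x \<and> f x \<le> 1)
              \<and> antimono_on {a..} (\<lambda>x. f x * ln x)
              \<and> (\<integral>\<^sup>+ x \<in> {a..}. ennreal (f x * ln x / x) \<partial>lborel) < \<infinity>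
              \<and> (\<forall>x\<ge>a. \<forall>n\<ge>N. \<forall>k\<le>n. 1 - cdf_abs M (A k n) x \<le> f x))"
    and assm2: "\<exists>(N::nat) (b::real) (g::real \<Rightarrow> real). 0 < b \<and> b < 1
              \<and> (\<forall>x\<in>{0..b}. 0 \<le> g x \<and> g x \<le> 1)
              \<and> mono_on {0..b} g
              \<and> (\<integral>\<^sup>+ x \<in> {0..b}. ennreal (g x / x) \<partial>lborel) < \<infinity>
              \<and> (\<forall>x\<in>{0..b}. \<forall>n\<ge>N. \<forall>k\<le>n. cdf_abs M (A k n) x \<le> g x)"
  shows "AE \<omega> in M.
           (\<lambda>n. cmod (A n n \<omega>) powr (1 / real n)) \<longlonglongrightarrow> 1
         \<and> (\<forall>k. (\<lambda>n. cmod (A k n \<omega>) powr (1 / real n)) \<longlonglongrightarrow> 1)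
         \<and> (\<lambda>n. Max {cmod (A k n \<omega>) powr (1 / real n) | k. k \<le> n}) \<longlonglongrightarrow> 1"
proof -
  interpret prob_space M by (rule P)
  from assm1 obtain N1 a f where a: "a > 1" and f01: "\<forall>x\<ge>a. 0 \<le> f x \<and> f x \<le> 1"
    and anti: "antimono_on {a..} (\<lambda>x. f x * ln x)"
    and fin1: "(\<integral>\<^sup>+ x \<in> {a..}. ennreal (f x * ln x / x) \<partial>lborel) < \<infinity>"
    and tail: "\<forall>x\<ge>a. \<forall>n\<ge>N1. \<forall>k\<le>n. 1 - cdf_abs M (A k n) x \<le> f x" by blast
  from assm2 obtain N2 b g where b: "0 < b" and g01: "\<forall>x\<in>{0..b}. 0 \<le> g x \<and> g x \<le> 1"
    and mono: "mono_on {0..b} g"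
    and fin2: "(\<integral>\<^sup>+ x \<in> {0..b}. ennreal (g x / x) \<partial>lborel) < \<infinity>"
    and cdf: "\<forall>x\<in>{0..b}. \<forall>n\<ge>N2. \<forall>k\<le>n. cdf_abs M (A k n) x \<le> g x" by blast
  have abs_meas: "(\<lambda>\<omega>. cmod (A k n \<omega>)) \<in> borel_measurable M" if "k \<le> n" for k n
    using meas[OF that] by measurable
  have abs_tail: "prob {\<omega>\<in>space M. x < cmod (A k n \<omega>)} \<le> f x" if "a \<le> x" "N1 \<le> n" "k \<le> n" for x n k
    using tail prob_abs_greater[OF meas] that by simp
  have abs_cdf: "prob {\<omega>\<in>space M. cmod (A k n \<omega>) \<le> x} \<le> g x" if "x \<in> {0..b}" "N2 \<le> n" "k \<le> n" for x n k
    using cdf that by (simp add: cdf_abs_def)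
  have f0: "\<forall>x\<ge>a. 0 \<le> f x" and g0: "\<forall>x\<in>{0..b}. 0 \<le> g x" using f01 g01 by auto
  show ?thesis
    using AE_triangular_root_limits[where Y = "\<lambda>k n \<omega>. cmod (A k n \<omega>)", OF abs_meas _ abs_tail a f0 anti fin1
        abs_cdf b g0 mono fin2]
    by simp
qed

end
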